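(* Let $G=(V,E)$ be an undirected graph with nonnegative edge weights, not necessarily planar. Let $Q$ be a shortest path in $G$, let $u\in V$, and let $\epsilon',\epsilon''>0$. Let $H$ be an undirected graph with nonnegative edge weights such that $u\in V(H)\subseteq V$ and $d_H(v_1,v_2)\ge d_G(v_1,v_2)$ for all $v_1,v_2\in V(H)$. Assume that for every $v\in V(Q)$ there is a vertex $v'\in V(H)\cap V(Q)$ with $$d_H(u,v')+d_Q(v',v)\le (1+\epsilon')\,d_G(u,v).$$ Then there is a subset $P_H\subseteq V(H)\cap V(Q)$ of size $O(1/\epsilon'')$ such that for every $v\in V(Q)$ there is a $p\in P_H$ with $$d_H(u,p)+d_Q(p,v)\le (1+\epsilon')(1+\epsilon'')\,d_G(u,v).$$
   Context: For a graph $X$ with nonnegative edge weights, $d_X(a,b)$ denotes the shortest-path distance between $a$ and $b$ in $X$. For the path $Q$, $d_Q(a,b)$ is the weight of the subpath of $Q$ between $a$ and $b$. *)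

theory Defs
  imports "HOL-Library.Extended_Nonnegative_Real"
begin

record 'a wgraph =
  verts :: "'a set"
  edges :: "('a \<times> 'a) set"
  weight :: "'a \<Rightarrow> 'a \<Rightarrow> real"

definition ugraph :: "'a wgraph \<Rightarrow> bool" where
  "ugraph G \<longleftrightarrow> finite (verts G) \<and> edges G \<subseteq> verts G \<times> verts G \<and> sym (edges G)
     \<and> (\<forall>(a,b)\<in>edges G. weight G a b \<ge> 0 \<and> weight G a b = weight G b a)"

definition is_walk :: "'a wgraph \<Rightarrow> 'a list \<Rightarrow> bool" where
  "is_walk G xs \<longleftrightarrow> xs \<noteq> [] \<and> set xs \<subseteq> verts G
     \<and> (\<forall>i. Suc i < length xs \<longrightarrow> (xs ! i, xs ! Suc i) \<in> edges G)"

definition walk_weight :: "'a wgraph \<Rightarrow> 'a list \<Rightarrow> real" where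
  "walk_weight G xs = (\<Sum>i<length xs - 1. weight G (xs ! i) (xs ! Suc i))"

text \<open>Shortest-path distance; \<infinity> if no walk exists.\<close>
definition gdist :: "'a wgraph \<Rightarrow> 'a \<Rightarrow> 'a \<Rightarrow> ennreal" where
  "gdist G a b = (INF xs \<in> {xs. is_walk G xs \<and> hd xs = a \<and> last xs = b}. ennreal (walk_weight G xs))"

definition shortest_path :: "'a wgraph \<Rightarrow> 'a list \<Rightarrow> bool" where
  "shortest_path G Q \<longleftrightarrow> is_walk G Q \<and> distinct Q
     \<and> ennreal (walk_weight G Q) = gdist G (hd Q) (last Q)"

definition path_dist :: "'a wgraph \<Rightarrow> 'a list \<Rightarrow> 'a \<Rightarrow> 'a \<Rightarrow> real" where
  "path_dist G Q a b =
     (let i = (THE i. i < length Q \<and> Q ! i = a); j = (THE j. j < length Q \<and> Q ! j = b)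
      in (\<Sum>k\<in>{min i j..<max i j}. weight G (Q ! k) (Q ! Suc k)))"

end

theory Submission
  imports Defs
begin

(* Place the vertices of Q on the real line at their distance x along Q, so that the portal p
   serves the vertex v at cost c(p, v) = d_H(u, p) + |x p - x v|, and let F v be the best cost
   of v. Since Q is a shortest path and d_H dominates d_G, |x v - x w| <= F v + F w, and F is
   1-Lipschitz. Let m minimise F. On either side of m the quantity x v - F v ranges over an
   interval of length 2 F m; cut it into about 2/eps pieces of length at most eps F m <= eps F v
   and, in each piece, keep the best portal of the vertex closest to m. It serves every vertex
   of its piece within a factor 1 + eps of optimal. *)

section \<open>Walks and distances\<close>

lemma is_walk_iff_successively:
  "is_walk G xs \<longleftrightarrow> xs \<noteq> [] \<and> set xs \<subseteq> verts G \<and> successively (\<lambda>x y. (x, y) \<in> edges G) xs"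
  by (simp add: is_walk_def successively_conv_nth)

lemma is_walk_singleton [simp]: "is_walk G [x] \<longleftrightarrow> x \<in> verts G"
  by (simp add: is_walk_def)

lemma is_walk_Cons_Cons:
  "is_walk G (x # y # zs) \<longleftrightarrow> x \<in> verts G \<and> (x, y) \<in> edges G \<and> is_walk G (y # zs)"
  by (auto simp: is_walk_iff_successively)

lemma walk_weight_singleton [simp]: "walk_weight G [x] = 0"
  by (simp add: walk_weight_def)

lemma walk_weight_Cons_Cons: "walk_weight G (x # y # zs) = weight G x y + walk_weight G (y # zs)"
  unfolding walk_weight_def by (simp del: sum.lessThan_Suc add: sum.lessThan_Suc_shift)

lemma walk_join:
  assumes "is_walk G X" "is_walk G Y" "last X = hd Y"
  shows "is_walk G (butlast X @ Y) \<and> walk_weight G (butlast X @ Y) = walk_weight G X + walk_weight G Y"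
  using assms
proof (induction X rule: induct_list012)
  case 1
  then show ?case by (simp add: is_walk_def)
next
  case (2 x)
  then show ?case by simp
next
  case (3 x y zs)
  have x: "x \<in> verts G" "(x, y) \<in> edges G" and yzs: "is_walk G (y # zs)"
    using "3.prems"(1) by (auto simp: is_walk_Cons_Cons)
  obtain T where T: "butlast (y # zs) @ Y = y # T"
    using "3.prems"(2,3) by (cases zs) (auto simp: is_walk_def neq_Nil_conv)
  have "is_walk G (y # T)" "walk_weight G (y # T) = walk_weight G (y # zs) + walk_weight G Y"
    using "3.IH"(2)[OF yzs "3.prems"(2)] "3.prems"(3) unfolding T by simp_all
  then show ?case
    using T x by (simp add: is_walk_Cons_Cons walk_weight_Cons_Cons)
qed

lemma walk_join_ends:
  assumes "is_walk G X" "is_walk G Y" "last X = hd Y"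
  shows "hd (butlast X @ Y) = hd X" "last (butlast X @ Y) = last Y"
proof -
  have "X \<noteq> []" "Y \<noteq> []"
    using assms by (auto simp: is_walk_def)
  then show "hd (butlast X @ Y) = hd X"
    using assms(3) by (cases X rule: rev_cases) (auto simp: hd_append)
  show "last (butlast X @ Y) = last Y"
    using \<open>Y \<noteq> []\<close> by simp
qed

lemma walk_rev:
  assumes G: "ugraph G" and W: "is_walk G W"
  shows "is_walk G (rev W) \<and> walk_weight G (rev W) = walk_weight G W"
  using W
proof (induction W rule: induct_list012)
  case (3 x y zs)
  have xy: "x \<in> verts G" "(x, y) \<in> edges G" and yzs: "is_walk G (y # zs)"
    using "3.prems" by (auto simp: is_walk_Cons_Cons)
  have "(y, x) \<in> edges G" "weight G y x = weight G x y"
    using G xy(2) unfolding ugraph_def by (auto dest: symD)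
  moreover have "y \<in> verts G"
    using yzs by (simp add: is_walk_def)
  ultimately have "is_walk G [y, x]" "walk_weight G [y, x] = weight G x y"
    using xy by (simp_all add: is_walk_Cons_Cons walk_weight_Cons_Cons)
  moreover have "rev (x # y # zs) = butlast (rev (y # zs)) @ [y, x]"
    by simp
  ultimately show ?case
    using "3.IH"(2)[OF yzs] walk_join[of G "rev (y # zs)" "[y, x]"]
    by (simp add: walk_weight_Cons_Cons)
qed simp_all

lemma walk_weight_nonneg:
  assumes "ugraph G" "is_walk G W"
  shows "walk_weight G W \<ge> 0"
  using assms unfolding walk_weight_def ugraph_def is_walk_def by (fastforce intro: sum_nonneg)

lemma gdist_le_walk_weight:
  "is_walk G W \<Longrightarrow> gdist G (hd W) (last W) \<le> ennreal (walk_weight G W)"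
  unfolding gdist_def by (rule INF_lower) auto

lemma gdist_commute:
  assumes "ugraph G"
  shows "gdist G a b = gdist G b a"
proof -
  have "gdist G a b \<le> gdist G b a" for a b
    unfolding gdist_def[of G b a]
  proof (rule INF_greatest)
    fix W assume "W \<in> {xs. is_walk G xs \<and> hd xs = b \<and> last xs = a}"
    then have "is_walk G W" "W \<noteq> []" "hd W = b" "last W = a"
      by (auto simp: is_walk_def)
    then show "gdist G a b \<le> ennreal (walk_weight G W)"
      using walk_rev[OF assms] gdist_le_walk_weight[of G "rev W"] by (simp add: hd_rev last_rev)
  qed
  then show ?thesis
    by (blast intro: antisym)
qed

lemma ennreal_add_INF:
  fixes c :: ennreal
  shows "c + (INF y\<in>B. g y) = (INF y\<in>B. c + g y)"
proof (cases "B = {}")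
  case False
  have "(\<lambda>x. c + x) (Inf (g ` B)) = (INF s\<in>g ` B. c + s)"
    by (rule continuous_at_Inf_mono)
      (auto simp: mono_def add_left_mono False intro!: continuous_intros)
  then show ?thesis
    by (simp add: image_comp)
qed simp

lemma ennreal_le_INF_add_INF:
  fixes z :: ennreal
  assumes "\<And>x y. x \<in> A \<Longrightarrow> y \<in> B \<Longrightarrow> z \<le> f x + g y"
  shows "z \<le> (INF x\<in>A. f x) + (INF y\<in>B. g y)"
proof -
  have "z \<le> (INF x\<in>A. f x + (INF y\<in>B. g y))"
    using assms by (intro INF_greatest) (simp add: ennreal_add_INF INF_greatest)
  also have "\<dots> = (INF x\<in>A. f x) + (INF y\<in>B. g y)"
    using ennreal_add_INF[of "INF y\<in>B. g y" f A] by (simp add: add.commute)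
  finally show ?thesis .
qed

lemma gdist_triangle:
  assumes G: "ugraph G"
  shows "gdist G a c \<le> gdist G a b + gdist G b c"
  unfolding gdist_def[of G a b] gdist_def[of G b c]
proof (rule ennreal_le_INF_add_INF)
  fix X Y
  assume "X \<in> {xs. is_walk G xs \<and> hd xs = a \<and> last xs = b}"
    and "Y \<in> {xs. is_walk G xs \<and> hd xs = b \<and> last xs = c}"
  then have X: "is_walk G X" "hd X = a" "last X = b"
    and Y: "is_walk G Y" "hd Y = b" "last Y = c"
    by auto
  then have "gdist G a c \<le> ennreal (walk_weight G X + walk_weight G Y)"
    using walk_join[of G X Y] walk_join_ends[of G X Y] gdist_le_walk_weight[of G "butlast X @ Y"]
    by simp
  then show "gdist G a c \<le> ennreal (walk_weight G X) + ennreal (walk_weight G Y)"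
    using walk_weight_nonneg[OF G] X Y by (simp add: ennreal_plus)
qed

section \<open>Distances along a shortest path\<close>

definition path_index :: "'a list \<Rightarrow> 'a \<Rightarrow> nat" where
  "path_index Q a = (THE i. i < length Q \<and> Q ! i = a)"

definition prefix_weight :: "'a wgraph \<Rightarrow> 'a list \<Rightarrow> nat \<Rightarrow> real" where
  "prefix_weight G Q j = (\<Sum>k<j. weight G (Q ! k) (Q ! Suc k))"

definition path_pos :: "'a wgraph \<Rightarrow> 'a list \<Rightarrow> 'a \<Rightarrow> real" where
  "path_pos G Q a = prefix_weight G Q (path_index Q a)"

lemma path_index_nth:
  assumes "distinct Q" "i < length Q"
  shows "path_index Q (Q ! i) = i"
  unfolding path_index_def using assms by (auto intro!: the_equality simp: nth_eq_iff_index_eq)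

lemma path_index:
  assumes "distinct Q" "a \<in> set Q"
  shows "path_index Q a < length Q" "Q ! path_index Q a = a"
  using assms path_index_nth by (metis in_set_conv_nth)+

lemma prefix_weight_diff:
  "i \<le> j \<Longrightarrow> prefix_weight G Q j - prefix_weight G Q i = (\<Sum>k\<in>{i..<j}. weight G (Q ! k) (Q ! Suc k))"
  unfolding prefix_weight_def lessThan_atLeast0 by (simp add: sum_diff_nat_ivl)

lemma prefix_weight_mono:
  assumes "ugraph G" "is_walk G Q" "i \<le> j" "j < length Q"
  shows "prefix_weight G Q i \<le> prefix_weight G Q j"
proof -
  have "0 \<le> (\<Sum>k\<in>{i..<j}. weight G (Q ! k) (Q ! Suc k))"
    using assms unfolding ugraph_def is_walk_def by (fastforce intro: sum_nonneg)
  then show ?thesis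
    using prefix_weight_diff[OF assms(3), of G Q] by simp
qed

lemma walk_weight_eq_prefix_weight: "walk_weight G Q = prefix_weight G Q (length Q - 1)"
  unfolding walk_weight_def prefix_weight_def ..

lemma path_dist_eq_abs:
  assumes G: "ugraph G" and Q: "is_walk G Q" "distinct Q" and ab: "a \<in> set Q" "b \<in> set Q"
  shows "path_dist G Q a b = \<bar>path_pos G Q a - path_pos G Q b\<bar>"
proof -
  have "(\<Sum>k\<in>{min i j..<max i j}. weight G (Q ! k) (Q ! Suc k)) = \<bar>prefix_weight G Q i - prefix_weight G Q j\<bar>"
    if "i < length Q" "j < length Q" for i j
    using that prefix_weight_diff[of i j G Q] prefix_weight_diff[of j i G Q]
      prefix_weight_mono[OF G Q(1), of i j] prefix_weight_mono[OF G Q(1), of j i]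
    by (cases "i \<le> j") auto
  then show ?thesis
    unfolding path_dist_def path_pos_def Let_def path_index_def[symmetric]
    using path_index[OF Q(2)] ab by simp
qed

lemma subwalk:
  assumes Q: "is_walk G Q" and ij: "i \<le> j" "j < length Q"
  defines "W \<equiv> map ((!) Q) [i..<Suc j]"
  shows "is_walk G W" "hd W = Q ! i" "last W = Q ! j"
    "walk_weight G W = prefix_weight G Q j - prefix_weight G Q i"
proof -
  have len: "length W = Suc j - i"
    unfolding W_def using ij by (simp add: Suc_diff_le)
  have nth: "W ! t = Q ! (i + t)" if "t < Suc j - i" for t
    unfolding W_def using that ij by (simp del: upt_Suc)
  show "is_walk G W"
    unfolding is_walk_def
  proof (intro conjI allI impI)
    show "W \<noteq> []"
      using len ij by auto
    have "set W \<subseteq> set Q"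
      unfolding W_def using ij by (auto simp del: upt_Suc)
    then show "set W \<subseteq> verts G"
      using Q unfolding is_walk_def by auto
    fix t
    assume "Suc t < length W"
    moreover have "Suc (i + t) < length Q"
      using calculation len ij by simp
    ultimately show "(W ! t, W ! Suc t) \<in> edges G"
      using Q nth len unfolding is_walk_def by simp
  qed
  show "hd W = Q ! i" "last W = Q ! j"
    unfolding W_def using ij by (simp_all add: hd_map last_map del: upt_Suc)
  have "walk_weight G W = (\<Sum>t<j - i. weight G (Q ! (i + t)) (Q ! Suc (i + t)))"
    unfolding walk_weight_def len using nth by (intro sum.cong) auto
  also have "\<dots> = (\<Sum>k\<in>{i..<j}. weight G (Q ! k) (Q ! Suc k))"
    using sum.shift_bounds_nat_ivl[of "\<lambda>k. weight G (Q ! k) (Q ! Suc k)" 0 i "j - i"] ij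
    by (simp add: lessThan_atLeast0 add.commute)
  finally show "walk_weight G W = prefix_weight G Q j - prefix_weight G Q i"
    using prefix_weight_diff[OF ij(1), of G Q] by simp
qed

lemma gdist_le_path_dist:
  assumes G: "ugraph G" and Q: "is_walk G Q" "distinct Q" and ab: "a \<in> set Q" "b \<in> set Q"
  shows "gdist G a b \<le> ennreal (path_dist G Q a b)"
proof -
  have *: "gdist G (Q ! i) (Q ! j) \<le> ennreal (prefix_weight G Q j - prefix_weight G Q i)"
    if "i \<le> j" "j < length Q" for i j
    using subwalk[OF Q(1) that] gdist_le_walk_weight[of G "map ((!) Q) [i..<Suc j]"] by simp
  define i j where "i = path_index Q a" and "j = path_index Q b"
  have "i < length Q" "j < length Q" "Q ! i = a" "Q ! j = b"
    using path_index[OF Q(2)] ab unfolding i_def j_def by auto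
  then show ?thesis
    using *[of i j] *[of j i] gdist_commute[OF G, of a b]
      prefix_weight_mono[OF G Q(1), of i j] prefix_weight_mono[OF G Q(1), of j i]
    unfolding path_dist_eq_abs[OF G Q ab] path_pos_def i_def[symmetric] j_def[symmetric]
    by (cases "i \<le> j") (auto simp: abs_minus_commute)
qed

lemma prefix_weight_diff_le_walk_weight:
  assumes G: "ugraph G" and Q: "shortest_path G Q" and ij: "i \<le> j" "j < length Q"
    and W: "is_walk G W" "hd W = Q ! i" "last W = Q ! j"
  shows "prefix_weight G Q j - prefix_weight G Q i \<le> walk_weight G W"
proof -
  define n where "n = length Q - 1"
  have Qw: "is_walk G Q" and Qopt: "ennreal (walk_weight G Q) = gdist G (hd Q) (last Q)"
    using Q unfolding shortest_path_def by auto
  have "Q \<noteq> []"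
    using ij by auto
  then have ends: "hd Q = Q ! 0" "last Q = Q ! n" "j \<le> n" "n < length Q"
    using ij unfolding n_def by (auto simp: hd_conv_nth last_conv_nth)
  define A B where "A = map ((!) Q) [0..<Suc i]" and "B = map ((!) Q) [j..<Suc n]"
  have A: "is_walk G A" "hd A = Q ! 0" "last A = Q ! i" "walk_weight G A = prefix_weight G Q i"
    using subwalk[OF Qw, of 0 i] ij unfolding A_def by (auto simp: prefix_weight_def)
  have B: "is_walk G B" "hd B = Q ! j" "last B = Q ! n"
    "walk_weight G B = prefix_weight G Q n - prefix_weight G Q j"
    using subwalk[OF Qw ends(3,4)] unfolding B_def by auto
  \<comment> \<open>Splicing W into Q between positions i and j gives a walk between the ends of Q.\<close>
  define X where "X = butlast (butlast A @ W) @ B"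
  have AW: "is_walk G (butlast A @ W)" "hd (butlast A @ W) = Q ! 0" "last (butlast A @ W) = Q ! j"
    "walk_weight G (butlast A @ W) = walk_weight G A + walk_weight G W"
    using walk_join[OF A(1) W(1)] walk_join_ends[OF A(1) W(1)] A W by auto
  have X: "is_walk G X" "hd X = hd Q" "last X = last Q"
    "walk_weight G X = walk_weight G A + walk_weight G W + walk_weight G B"
    using walk_join[OF AW(1) B(1)] walk_join_ends[OF AW(1) B(1)] AW B ends unfolding X_def by auto
  have "ennreal (walk_weight G Q) \<le> ennreal (walk_weight G X)"
    using gdist_le_walk_weight[OF X(1)] X(2,3) Qopt by simp
  then have "walk_weight G Q \<le> walk_weight G X"
    using walk_weight_nonneg[OF G X(1)] by simp
  then show ?thesis
    using X(4) A(4) B(4) walk_weight_eq_prefix_weight[of G Q] unfolding n_def by simp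
qed

lemma path_dist_le_gdist:
  assumes G: "ugraph G" and Q: "shortest_path G Q" and ab: "a \<in> set Q" "b \<in> set Q"
  shows "ennreal (path_dist G Q a b) \<le> gdist G a b"
  unfolding gdist_def
proof (rule INF_greatest)
  fix W
  assume "W \<in> {xs. is_walk G xs \<and> hd xs = a \<and> last xs = b}"
  then have W: "is_walk G W" "W \<noteq> []" "hd W = a" "last W = b"
    by (auto simp: is_walk_def)
  have Q': "is_walk G Q" "distinct Q"
    using Q unfolding shortest_path_def by auto
  define i j where "i = path_index Q a" and "j = path_index Q b"
  have ij: "i < length Q" "j < length Q" "Q ! i = a" "Q ! j = b"
    using path_index[OF Q'(2)] ab unfolding i_def j_def by auto
  have "\<bar>prefix_weight G Q i - prefix_weight G Q j\<bar> \<le> walk_weight G W"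
  proof (cases "i \<le> j")
    case True
    then show ?thesis
      using prefix_weight_diff_le_walk_weight[OF G Q True ij(2) W(1)] W ij
        prefix_weight_mono[OF G Q'(1) True ij(2)] by simp
  next
    case False
    then have "j \<le> i"
      by simp
    then show ?thesis
      using prefix_weight_diff_le_walk_weight[OF G Q _ ij(1), of j "rev W"] walk_rev[OF G W(1)] W ij
        prefix_weight_mono[OF G Q'(1) _ ij(1), of j] by (simp add: hd_rev last_rev)
  qed
  then show "ennreal (path_dist G Q a b) \<le> ennreal (walk_weight G W)"
    unfolding path_dist_eq_abs[OF G Q' ab] path_pos_def i_def[symmetric] j_def[symmetric] by simp
qed

lemma gdist_eq_path_dist:
  assumes "ugraph G" "shortest_path G Q" "a \<in> set Q" "b \<in> set Q"
  shows "gdist G a b = ennreal (path_dist G Q a b)"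
proof -
  have "is_walk G Q" "distinct Q"
    using assms(2) unfolding shortest_path_def by auto
  then show ?thesis
    using assms by (intro antisym gdist_le_path_dist path_dist_le_gdist)
qed

section \<open>Representatives on a line\<close>

lemma exists_min_representatives:
  fixes k :: "'j \<Rightarrow> 'k" and x :: "'j \<Rightarrow> 'b::linorder"
  assumes "finite J"
  shows "\<exists>R\<subseteq>J. card R \<le> card (k ` J) \<and> (\<forall>j\<in>J. \<exists>i\<in>R. k i = k j \<and> x i \<le> x j)"
proof -
  define rep where "rep b = arg_min_on x {i\<in>J. k i = b}" for b
  have rep: "rep (k j) \<in> J" "k (rep (k j)) = k j" "x (rep (k j)) \<le> x j" if "j \<in> J" for j
    using arg_min_if_finite(1)[of "{i\<in>J. k i = k j}" x] arg_min_least[of "{i\<in>J. k i = k j}" j x]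
      assms that unfolding rep_def by auto
  show ?thesis
  proof (intro exI conjI ballI)
    show "rep ` k ` J \<subseteq> J"
      using rep by auto
    show "card (rep ` k ` J) \<le> card (k ` J)"
      using assms by (intro card_image_le) simp
    show "\<exists>i\<in>rep ` k ` J. k i = k j \<and> x i \<le> x j" if "j \<in> J" for j
      using rep that by blast
  qed
qed

lemma exists_level_representatives:
  fixes t x :: "'j \<Rightarrow> real" and \<psi> \<theta> :: real and N :: nat
  assumes "finite J" "\<theta> \<ge> 0" and t: "\<forall>j\<in>J. \<psi> \<le> t j \<and> t j \<le> \<psi> + N * \<theta>"
  shows "\<exists>R\<subseteq>J. card R \<le> N + 1 \<and> (\<forall>j\<in>J. \<exists>i\<in>R. x i \<le> x j \<and> \<bar>t j - t i\<bar> \<le> \<theta>)"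
proof -
  \<comment> \<open>For \<open>\<theta> = 0\<close> division by zero puts every index on level 0, where all values of t coincide.\<close>
  define k where "k j = nat \<lfloor>(t j - \<psi>) / \<theta>\<rfloor>" for j
  have "k j \<le> N" if "j \<in> J" for j
  proof -
    have "(t j - \<psi>) / \<theta> \<le> N"
      using t that \<open>\<theta> \<ge> 0\<close> by (cases "\<theta> = 0") (auto simp: divide_le_eq mult.commute)
    then have "\<lfloor>(t j - \<psi>) / \<theta>\<rfloor> \<le> \<lfloor>real N\<rfloor>"
      by (rule floor_mono)
    then show ?thesis
      unfolding k_def by simp
  qed
  then have "k ` J \<subseteq> {0..N}"
    by auto
  then have card: "card (k ` J) \<le> N + 1"
    using card_mono[of "{0..N}" "k ` J"] by simp
  have same_level: "\<bar>t j - t i\<bar> \<le> \<theta>" if "i \<in> J" "j \<in> J" "k i = k j" for i j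
  proof (cases "\<theta> = 0")
    case True
    then have "t i = \<psi>" "t j = \<psi>"
      using t that True by (auto intro: antisym)
    then show ?thesis
      using \<open>\<theta> \<ge> 0\<close> by simp
  next
    case False
    then have "\<lfloor>(t i - \<psi>) / \<theta>\<rfloor> = \<lfloor>(t j - \<psi>) / \<theta>\<rfloor>"
      using t that \<open>\<theta> \<ge> 0\<close> unfolding k_def by (simp add: nat_eq_iff2)
    then have "\<bar>(t j - \<psi>) / \<theta> - (t i - \<psi>) / \<theta>\<bar> < 1"
      by linarith
    moreover have "(t j - \<psi>) / \<theta> - (t i - \<psi>) / \<theta> = (t j - t i) / \<theta>"
      by (simp add: diff_divide_distrib)
    ultimately show ?thesis
      using False \<open>\<theta> \<ge> 0\<close> by simp
  qed
  obtain R where R: "R \<subseteq> J" "card R \<le> card (k ` J)" "\<forall>j\<in>J. \<exists>i\<in>R. k i = k j \<and> x i \<le> x j"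
    using exists_min_representatives[OF \<open>finite J\<close>, of k x] by blast
  show ?thesis
  proof (intro exI[of _ R] conjI ballI)
    show "R \<subseteq> J" "card R \<le> N + 1"
      using R card by auto
    fix j
    assume "j \<in> J"
    then obtain i where "i \<in> R" "k i = k j" "x i \<le> x j"
      using R by blast
    then show "\<exists>i\<in>R. x i \<le> x j \<and> \<bar>t j - t i\<bar> \<le> \<theta>"
      using same_level R(1) \<open>j \<in> J\<close> by blast
  qed
qed

lemma exists_representatives_one_side:
  fixes x F :: "'j \<Rightarrow> real" and \<epsilon> M x\<^sub>0 :: real
  assumes "finite J" "\<epsilon> > 0" "M \<ge> 0" and JM: "\<forall>j\<in>J. M \<le> F j \<and> \<bar>x j - F j - x\<^sub>0\<bar> \<le> M"
  shows "\<exists>R\<subseteq>J. card R \<le> 2 / \<epsilon> + 2 \<and>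
    (\<forall>j\<in>J. \<exists>i\<in>R. F i + \<bar>x j - x i\<bar> \<le> (1 + \<epsilon>) * F j)"
proof -
  define N where "N = nat \<lceil>2 / \<epsilon>\<rceil>"
  have "2 / \<epsilon> > 0"
    using \<open>\<epsilon> > 0\<close> by simp
  then have "real N = of_int \<lceil>2 / \<epsilon>\<rceil>"
    unfolding N_def by simp
  then have N: "2 / \<epsilon> \<le> N" "N < 2 / \<epsilon> + 1" "N > 0"
    using ceiling_correct[of "2 / \<epsilon>"] \<open>2 / \<epsilon> > 0\<close> by linarith+
  define \<theta> where "\<theta> = 2 * M / N"
  have "\<theta> \<ge> 0" "N * \<theta> = 2 * M"
    using \<open>M \<ge> 0\<close> N(3) unfolding \<theta>_def by auto
  moreover have "\<theta> \<le> \<epsilon> * M"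
  proof -
    have "2 * M \<le> (\<epsilon> * N) * M"
      using N(1) \<open>\<epsilon> > 0\<close> \<open>M \<ge> 0\<close> by (intro mult_right_mono) (auto simp: field_simps)
    then show ?thesis
      unfolding \<theta>_def using N(3) by (simp add: divide_le_eq mult_ac)
  qed
  moreover have "\<forall>j\<in>J. x\<^sub>0 - M \<le> x j - F j \<and> x j - F j \<le> x\<^sub>0 - M + N * \<theta>"
    using JM \<open>N * \<theta> = 2 * M\<close> by (auto simp: abs_le_iff)
  ultimately obtain R where R: "R \<subseteq> J" "card R \<le> N + 1"
    "\<forall>j\<in>J. \<exists>i\<in>R. x i \<le> x j \<and> \<bar>(x j - F j) - (x i - F i)\<bar> \<le> \<theta>"
    using exists_level_representatives[OF \<open>finite J\<close>,
        where t="\<lambda>j. x j - F j" and x=x and \<psi>="x\<^sub>0 - M" and \<theta>=\<theta> and N=N]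
    by blast
  show ?thesis
  proof (intro exI[of _ R] conjI ballI)
    show "R \<subseteq> J"
      using R by simp
    have "real (card R) \<le> N + 1"
      using R(2) by linarith
    then show "card R \<le> 2 / \<epsilon> + 2"
      using N(2) by linarith
    fix j
    assume "j \<in> J"
    then obtain i where i: "i \<in> R" "x i \<le> x j" "\<bar>(x j - F j) - (x i - F i)\<bar> \<le> \<theta>"
      using R by blast
    have "F i + \<bar>x j - x i\<bar> = F j + ((x j - F j) - (x i - F i))"
      using i(2) by simp
    also have "\<dots> \<le> F j + \<epsilon> * M"
      using i(3) \<open>\<theta> \<le> \<epsilon> * M\<close> by linarith
    also have "\<dots> \<le> (1 + \<epsilon>) * F j"
      using JM \<open>j \<in> J\<close> \<open>\<epsilon> > 0\<close> by (simp add: algebra_simps)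
    finally show "\<exists>i\<in>R. F i + \<bar>x j - x i\<bar> \<le> (1 + \<epsilon>) * F j"
      using i(1) by blast
  qed
qed

lemma exists_representatives_on_line:
  fixes x F :: "'j \<Rightarrow> real" and \<epsilon> :: real
  assumes "finite J" "\<epsilon> > 0"
    and sep: "\<And>i j. i \<in> J \<Longrightarrow> j \<in> J \<Longrightarrow> \<bar>x j - x i\<bar> \<le> F i + F j"
    and lip: "\<And>i j. i \<in> J \<Longrightarrow> j \<in> J \<Longrightarrow> F j \<le> F i + \<bar>x j - x i\<bar>"
  shows "\<exists>R\<subseteq>J. card R \<le> 4 * (1 + 1 / \<epsilon>) \<and>
    (\<forall>j\<in>J. \<exists>i\<in>R. F i + \<bar>x j - x i\<bar> \<le> (1 + \<epsilon>) * F j)"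
proof (cases "J = {}")
  case True
  then show ?thesis
    using \<open>\<epsilon> > 0\<close> by simp
next
  case False
  define m where "m = arg_min_on F J"
  have m: "m \<in> J" "\<And>j. j \<in> J \<Longrightarrow> F m \<le> F j"
    using arg_min_if_finite(1)[OF \<open>finite J\<close> False, of F] arg_min_least[OF \<open>finite J\<close> False, of _ F]
    unfolding m_def by auto
  have "F m \<ge> 0"
    using sep[OF m(1) m(1)] by simp
  have bounds: "\<bar>x j - x m\<bar> \<le> F m + F j" "F j \<le> F m + \<bar>x j - x m\<bar>" "F m \<le> F j" if "j \<in> J" for j
    using sep[OF m(1) that] lip[OF m(1) that] m(2)[OF that] by auto
  define JR JL where "JR = {j\<in>J. x m \<le> x j}" and "JL = {j\<in>J. x j \<le> x m}"
  have "finite JR" "finite JL"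
    using \<open>finite J\<close> unfolding JR_def JL_def by simp_all
  have "F m \<le> F j \<and> \<bar>x j - F j - x m\<bar> \<le> F m" if "j \<in> JR" for j
    using bounds[of j] that unfolding JR_def by (auto simp: abs_le_iff)
  then obtain RR where RR: "RR \<subseteq> JR" "card RR \<le> 2 / \<epsilon> + 2"
    "\<forall>j\<in>JR. \<exists>i\<in>RR. F i + \<bar>x j - x i\<bar> \<le> (1 + \<epsilon>) * F j"
    using exists_representatives_one_side[OF \<open>finite JR\<close> \<open>\<epsilon> > 0\<close> \<open>F m \<ge> 0\<close>, of F x "x m"]
    by blast
  have "F m \<le> F j \<and> \<bar>- x j - F j - - x m\<bar> \<le> F m" if "j \<in> JL" for j
    using bounds[of j] that unfolding JL_def by (auto simp: abs_le_iff)
  then obtain RL where RL: "RL \<subseteq> JL" "card RL \<le> 2 / \<epsilon> + 2"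
    "\<forall>j\<in>JL. \<exists>i\<in>RL. F i + \<bar>- x j - - x i\<bar> \<le> (1 + \<epsilon>) * F j"
    using exists_representatives_one_side[OF \<open>finite JL\<close> \<open>\<epsilon> > 0\<close> \<open>F m \<ge> 0\<close>,
        of F "\<lambda>j. - x j" "- x m"]
    by blast
  show ?thesis
  proof (intro exI[of _ "RR \<union> RL"] conjI)
    show "RR \<union> RL \<subseteq> J"
      using RR(1) RL(1) unfolding JR_def JL_def by auto
    have "real (card (RR \<union> RL)) \<le> card RR + card RL"
      using card_Un_le[of RR RL] by linarith
    then show "card (RR \<union> RL) \<le> 4 * (1 + 1 / \<epsilon>)"
      using RR(2) RL(2) by (simp add: algebra_simps)
    have "J = JR \<union> JL"
      unfolding JR_def JL_def by auto
    then show "\<forall>j\<in>J. \<exists>i\<in>RR \<union> RL. F i + \<bar>x j - x i\<bar> \<le> (1 + \<epsilon>) * F j"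
      using RR(3) RL(3) by (auto simp: abs_minus_commute)
  qed
qed

section \<open>Thinning portals\<close>

lemma thin_portals_on_line:
  fixes a y :: "'s \<Rightarrow> real" and x :: "'j \<Rightarrow> real" and \<epsilon> :: real
  assumes "finite S" "S \<noteq> {}" "finite J" "\<epsilon> > 0"
    and sep: "\<And>v v' s s'. v \<in> J \<Longrightarrow> v' \<in> J \<Longrightarrow> s \<in> S \<Longrightarrow> s' \<in> S \<Longrightarrow>
      \<bar>x v - x v'\<bar> \<le> (a s + \<bar>y s - x v\<bar>) + (a s' + \<bar>y s' - x v'\<bar>)"
  shows "\<exists>P\<subseteq>S. card P \<le> 4 * (1 + 1 / \<epsilon>) \<and>
    (\<forall>v\<in>J. \<forall>s\<in>S. \<exists>p\<in>P. a p + \<bar>y p - x v\<bar> \<le> (1 + \<epsilon>) * (a s + \<bar>y s - x v\<bar>))"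
proof -
  define c where "c s v = a s + \<bar>y s - x v\<bar>" for s v
  define w where "w v = arg_min_on (\<lambda>s. c s v) S" for v
  define F where "F v = c (w v) v" for v
  have w: "w v \<in> S" "\<And>s. s \<in> S \<Longrightarrow> F v \<le> c s v" for v
    using arg_min_if_finite(1)[OF assms(1,2)] arg_min_least[OF assms(1,2)]
    unfolding F_def w_def by auto
  have c_lip: "c s j \<le> c s i + \<bar>x j - x i\<bar>" for s i j
    unfolding c_def by linarith
  have "F j \<le> F i + \<bar>x j - x i\<bar>" for i j
    using w(2)[OF w(1), of j i] c_lip[of "w i" j i] unfolding F_def by linarith
  moreover have "\<bar>x j - x i\<bar> \<le> F i + F j" if "i \<in> J" "j \<in> J" for i j
    using sep[OF that(2,1) w(1) w(1), of j i] unfolding F_def c_def by simp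
  ultimately obtain R where R: "R \<subseteq> J" "card R \<le> 4 * (1 + 1 / \<epsilon>)"
    "\<forall>j\<in>J. \<exists>i\<in>R. F i + \<bar>x j - x i\<bar> \<le> (1 + \<epsilon>) * F j"
    using exists_representatives_on_line[OF \<open>finite J\<close> \<open>\<epsilon> > 0\<close>, of x F] by blast
  show ?thesis
  proof (intro exI[of _ "w ` R"] conjI ballI)
    show "w ` R \<subseteq> S"
      using w(1) by auto
    have "card (w ` R) \<le> card R"
      using R(1) \<open>finite J\<close> by (intro card_image_le) (auto intro: finite_subset)
    then show "card (w ` R) \<le> 4 * (1 + 1 / \<epsilon>)"
      using R(2) by linarith
    fix v s
    assume "v \<in> J" "s \<in> S"
    then obtain i where i: "i \<in> R" "F i + \<bar>x v - x i\<bar> \<le> (1 + \<epsilon>) * F v"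
      using R(3) by blast
    have "c (w i) v \<le> (1 + \<epsilon>) * F v"
      using c_lip[of "w i" v i] i(2) unfolding F_def by linarith
    also have "\<dots> \<le> (1 + \<epsilon>) * c s v"
      using w(2)[OF \<open>s \<in> S\<close>] \<open>\<epsilon> > 0\<close> by simp
    finally show "\<exists>p\<in>w ` R. a p + \<bar>y p - x v\<bar> \<le> (1 + \<epsilon>) * (a s + \<bar>y s - x v\<bar>)"
      using i(1) unfolding c_def by blast
  qed
qed

lemma gdist_le_via_portal:
  assumes G: "ugraph G" and Q: "shortest_path G Q"
    and dom: "\<forall>v1\<in>verts H. \<forall>v2\<in>verts H. gdist H v1 v2 \<ge> gdist G v1 v2"
    and "u \<in> verts H" "s \<in> verts H \<inter> set Q" "v \<in> set Q"
  shows "gdist G u v \<le> gdist H u s + ennreal (path_dist G Q s v)"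
proof -
  have "gdist G u v \<le> gdist G u s + gdist G s v"
    using gdist_triangle[OF G] .
  also have "\<dots> \<le> gdist H u s + ennreal (path_dist G Q s v)"
    using dom assms(4-6) gdist_eq_path_dist[OF G Q] by (intro add_mono) auto
  finally show ?thesis .
qed

lemma path_dist_le_portal_costs:
  assumes G: "ugraph G" and Q: "shortest_path G Q"
    and dom: "\<forall>v1\<in>verts H. \<forall>v2\<in>verts H. gdist H v1 v2 \<ge> gdist G v1 v2"
    and "u \<in> verts H" "s \<in> verts H \<inter> set Q" "s' \<in> verts H \<inter> set Q" "v \<in> set Q" "v' \<in> set Q"
  shows "ennreal (path_dist G Q v v')
    \<le> (gdist H u s + ennreal (path_dist G Q s v)) + (gdist H u s' + ennreal (path_dist G Q s' v'))"
proof -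
  have "ennreal (path_dist G Q v v') = gdist G v v'"
    using gdist_eq_path_dist[OF G Q] assms(7,8) by simp
  also have "\<dots> \<le> gdist G u v + gdist G u v'"
    using gdist_triangle[OF G, where a=v and b=u and c=v'] gdist_commute[OF G, of v u] by simp
  also have "\<dots> \<le> (gdist H u s + ennreal (path_dist G Q s v)) + (gdist H u s' + ennreal (path_dist G Q s' v'))"
    using gdist_le_via_portal[OF G Q dom] assms(4-8) by (intro add_mono)
  finally show ?thesis .
qed

lemma thin_portals:
  fixes \<epsilon> :: real
  assumes G: "ugraph G" and Q: "shortest_path G Q" and "u \<in> verts H"
    and dom: "\<forall>v1\<in>verts H. \<forall>v2\<in>verts H. gdist H v1 v2 \<ge> gdist G v1 v2"
    and "verts H \<inter> set Q \<noteq> {}" "\<epsilon> > 0"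
  shows "\<exists>P\<subseteq>verts H \<inter> set Q. card P \<le> 4 * (1 + 1 / \<epsilon>) \<and>
    (\<forall>v\<in>set Q. \<forall>s\<in>verts H \<inter> set Q. \<exists>p\<in>P. gdist H u p + ennreal (path_dist G Q p v)
       \<le> ennreal (1 + \<epsilon>) * (gdist H u s + ennreal (path_dist G Q s v)))"
    (is "\<exists>P\<subseteq>?S. _ \<and> (\<forall>v\<in>_. \<forall>s\<in>_. \<exists>p\<in>P. ?cost p v \<le> _ * ?cost s v)")
proof -
  \<comment> \<open>Only portals at finite distance from u need to be matched; for the others the bound is \<open>\<infinity>\<close>.\<close>
  define S' where "S' = {s\<in>?S. gdist H u s \<noteq> \<infinity>}"
  define a where "a s = enn2real (gdist H u s)" for s
  define x where "x = path_pos G Q"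
  have Q': "is_walk G Q" "distinct Q"
    using Q unfolding shortest_path_def by auto
  have cost: "?cost s v = ennreal (a s + \<bar>x s - x v\<bar>)" if "s \<in> S'" "v \<in> set Q" for s v
    using that path_dist_eq_abs[OF G Q', of s v] unfolding S'_def a_def x_def
    by (auto simp: ennreal_plus less_top)
  have top: "ennreal (1 + \<epsilon>) * ?cost s v = \<infinity>" if "s \<in> ?S - S'" for s v
    using that \<open>\<epsilon> > 0\<close> unfolding S'_def by (simp add: ennreal_mult_top)
  show ?thesis
  proof (cases "S' = {}")
    case True
    obtain s\<^sub>0 where "s\<^sub>0 \<in> ?S"
      using \<open>?S \<noteq> {}\<close> by blast
    then show ?thesis
      using top True \<open>\<epsilon> > 0\<close> by (intro exI[of _ "{s\<^sub>0}"]) auto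
  next
    case False
    have "\<bar>x v - x v'\<bar> \<le> (a s + \<bar>x s - x v\<bar>) + (a s' + \<bar>x s' - x v'\<bar>)"
      if "v \<in> set Q" "v' \<in> set Q" "s \<in> S'" "s' \<in> S'" for v v' s s'
    proof -
      have "ennreal \<bar>x v - x v'\<bar> \<le> ennreal ((a s + \<bar>x s - x v\<bar>) + (a s' + \<bar>x s' - x v'\<bar>))"
        using path_dist_le_portal_costs[OF G Q dom \<open>u \<in> verts H\<close>, of s s' v v'] that
          path_dist_eq_abs[OF G Q' that(1,2)] cost[of s v] cost[of s' v']
        unfolding S'_def a_def x_def by (simp add: ennreal_plus)
      then show ?thesis
        by (subst (asm) ennreal_le_iff) (auto simp: a_def)
    qed
    then obtain P where P: "P \<subseteq> S'" "card P \<le> 4 * (1 + 1 / \<epsilon>)"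
      "\<forall>v\<in>set Q. \<forall>s\<in>S'. \<exists>p\<in>P. a p + \<bar>x p - x v\<bar> \<le> (1 + \<epsilon>) * (a s + \<bar>x s - x v\<bar>)"
      using thin_portals_on_line[of S' "set Q" \<epsilon> x a x] False \<open>\<epsilon> > 0\<close> unfolding S'_def by auto
    have near: "\<exists>p\<in>P. ?cost p v \<le> ennreal (1 + \<epsilon>) * ?cost s v" if vs: "v \<in> set Q" "s \<in> S'" for v s
    proof -
      obtain p where p: "p \<in> P" "a p + \<bar>x p - x v\<bar> \<le> (1 + \<epsilon>) * (a s + \<bar>x s - x v\<bar>)"
        using P(3) vs by blast
      have "?cost p v = ennreal (a p + \<bar>x p - x v\<bar>)"
        using cost P(1) p(1) vs(1) by blast
      also have "\<dots> \<le> ennreal ((1 + \<epsilon>) * (a s + \<bar>x s - x v\<bar>))"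
        using p(2) by (rule ennreal_leI)
      also have "\<dots> = ennreal (1 + \<epsilon>) * ?cost s v"
        using cost[OF vs(2,1)] \<open>\<epsilon> > 0\<close> by (simp add: ennreal_mult a_def)
      finally show ?thesis
        using p(1) by blast
    qed
    have "hd Q \<in> set Q"
      using Q' by (simp add: is_walk_def)
    then have "P \<noteq> {}"
      using near False by blast
    show ?thesis
    proof (intro exI[of _ P] conjI ballI)
      show "P \<subseteq> ?S" "card P \<le> 4 * (1 + 1 / \<epsilon>)"
        using P(1,2) unfolding S'_def by auto
      fix v s
      assume "v \<in> set Q" "s \<in> ?S"
      then show "\<exists>p\<in>P. ?cost p v \<le> ennreal (1 + \<epsilon>) * ?cost s v"
        using near[of v s] top[of s v] \<open>P \<noteq> {}\<close> by (cases "s \<in> S'") auto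
    qed
  qed
qed

lemma thin_portals_stretch:
  fixes \<epsilon>1 \<epsilon>2 :: real
  assumes G: "ugraph G" and Q: "shortest_path G Q" and "\<epsilon>1 > 0" "\<epsilon>2 > 0" and u: "u \<in> verts H"
    and dom: "\<forall>v1\<in>verts H. \<forall>v2\<in>verts H. gdist H v1 v2 \<ge> gdist G v1 v2"
    and covered: "\<forall>v\<in>set Q. \<exists>v'\<in>verts H \<inter> set Q.
      gdist H u v' + ennreal (path_dist G Q v' v) \<le> ennreal (1 + \<epsilon>1) * gdist G u v"
  shows "\<exists>P\<subseteq>verts H \<inter> set Q. card P \<le> 4 * (1 + 1 / \<epsilon>2) \<and>
    (\<forall>v\<in>set Q. \<exists>p\<in>P. gdist H u p + ennreal (path_dist G Q p v)
       \<le> ennreal ((1 + \<epsilon>1) * (1 + \<epsilon>2)) * gdist G u v)"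
proof -
  have "hd Q \<in> set Q"
    using Q unfolding shortest_path_def is_walk_def by simp
  then have "verts H \<inter> set Q \<noteq> {}"
    using covered by blast
  then obtain P where P: "P \<subseteq> verts H \<inter> set Q" "card P \<le> 4 * (1 + 1 / \<epsilon>2)"
    "\<forall>v\<in>set Q. \<forall>s\<in>verts H \<inter> set Q. \<exists>p\<in>P. gdist H u p + ennreal (path_dist G Q p v)
       \<le> ennreal (1 + \<epsilon>2) * (gdist H u s + ennreal (path_dist G Q s v))"
    using thin_portals[OF G Q u dom _ \<open>\<epsilon>2 > 0\<close>] by blast
  have "\<exists>p\<in>P. gdist H u p + ennreal (path_dist G Q p v)
      \<le> ennreal ((1 + \<epsilon>1) * (1 + \<epsilon>2)) * gdist G u v" if "v \<in> set Q" for v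
  proof -
    obtain v' where v': "v' \<in> verts H \<inter> set Q"
      "gdist H u v' + ennreal (path_dist G Q v' v) \<le> ennreal (1 + \<epsilon>1) * gdist G u v"
      using covered \<open>v \<in> set Q\<close> by blast
    then obtain p where p: "p \<in> P" "gdist H u p + ennreal (path_dist G Q p v)
       \<le> ennreal (1 + \<epsilon>2) * (gdist H u v' + ennreal (path_dist G Q v' v))"
      using P(3) \<open>v \<in> set Q\<close> by blast
    note p(2)
    also have "\<dots> \<le> ennreal (1 + \<epsilon>2) * (ennreal (1 + \<epsilon>1) * gdist G u v)"
      using v'(2) by (rule mult_left_mono) simp
    also have "\<dots> = ennreal ((1 + \<epsilon>1) * (1 + \<epsilon>2)) * gdist G u v"
      using assms(3,4) by (simp add: ennreal_mult mult_ac)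
    finally show ?thesis
      using p(1) by blast
  qed
  then show ?thesis
    using P(1,2) by blast
qed

theorem lemma2:
  shows "\<exists>C::real. C > 0 \<and>
    (\<forall>(G::'a wgraph) (H::'a wgraph) Q u (\<epsilon>1::real) (\<epsilon>2::real).
       ugraph G \<and> ugraph H \<and> shortest_path G Q \<and> \<epsilon>1 > 0 \<and> \<epsilon>2 > 0 \<and>
       u \<in> verts H \<and> verts H \<subseteq> verts G \<and>
       (\<forall>v1\<in>verts H. \<forall>v2\<in>verts H. gdist H v1 v2 \<ge> gdist G v1 v2) \<and>
       (\<forall>v\<in>set Q. \<exists>v'\<in>verts H \<inter> set Q.
          gdist H u v' + ennreal (path_dist G Q v' v) \<le> ennreal (1 + \<epsilon>1) * gdist G u v)
     \<longrightarrow> (\<exists>P. P \<subseteq> verts H \<inter> set Q \<and> real (card P) \<le> C * (1 + 1 / \<epsilon>2) \<and>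
            (\<forall>v\<in>set Q. \<exists>p\<in>P.
               gdist H u p + ennreal (path_dist G Q p v)
                 \<le> ennreal ((1 + \<epsilon>1) * (1 + \<epsilon>2)) * gdist G u v)))"
  by (intro exI[of _ 4] conjI allI impI; (elim conjE)?; (rule thin_portals_stretch)?) simp_all

end
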